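(* Let $\rho$ be a symmetric probability measure on $\mathbb{R}$ with positive variance $\sigma^2$ such that $(0,0)$ belongs to the interior of $D_\Lambda=\{(u,v)\in\mathbb{R}^2:\Lambda(u,v)<+\infty\}$, where $\Lambda(u,v)=\ln\int_{\mathbb{R}}e^{uz+vz^2}\,d\rho(z)$. If $A$ is a closed subset of $\mathbb{R}^2$ which does not contain $(0,\sigma^2)$, then \[\limsup_{n\to+\infty}\frac1n\ln\int_{\Delta^{*}\cap A}\exp\left(\frac{nx^2}{2y}\right)d\widetilde{\nu}_{n,\rho}(x,y)<0.\]
   Context: $\Delta=\{(x,y)\in\mathbb{R}^2: x^2\le y\}$ and $\Delta^{*}=\Delta\setminus\{(0,0)\}$ (so $y>0$ on $\Delta^*$). For $n\ge1$, $\widetilde{\nu}_{n,\rho}$ denotes the law of $\left(\frac1n\sum_{i=1}^n X_i,\frac1n\sum_{i=1}^n X_i^2\right)$ where $X_1,\dots,X_n$ are i.i.d. with law $\rho$. *)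

theory Defs
  imports "HOL-Probability.Probability"
begin

definition Delta :: "(real \<times> real) set" where
  "Delta = {(x, y). x\<^sup>2 \<le> y}"

definition Delta_star :: "(real \<times> real) set" where
  "Delta_star = Delta - {(0, 0)}"

definition nu_tilde :: "nat \<Rightarrow> real measure \<Rightarrow> (real \<times> real) measure" where
  "nu_tilde n \<rho> = distr (PiM {..<n} (\<lambda>_. \<rho>)) borel
     (\<lambda>X. ((\<Sum>i<n. X i) / real n, (\<Sum>i<n. (X i)\<^sup>2) / real n))"

definition D_Lambda :: "real measure \<Rightarrow> (real \<times> real) set" where
  "D_Lambda \<rho> = {(u, v). (\<integral>\<^sup>+ z. ennreal (exp (u * z + v * z\<^sup>2)) \<partial>\<rho>) < \<infinity>}"

definition eln :: "ennreal \<Rightarrow> ereal" where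
  "eln t = (if t = 0 then -\<infinity> else if t = \<infinity> then \<infinity> else ereal (ln (enn2real t)))"

end

theory Submission
  imports Defs
begin

text \<open>
  At the empirical point \<open>(x, y)\<close> of a sample \<open>X\<^sub>1, \<dots>, X\<^sub>n\<close> the exponent \<open>n x\<^sup>2 / (2 y)\<close> is
  bounded, region by region, by an additive functional \<open>\<Sum>i. h (X\<^sub>i)\<close> with \<open>\<integral> e\<^sup>h d\<rho> < 1\<close>; by
  independence such a region contributes at most \<open>(\<integral> e\<^sup>h d\<rho>)\<^sup>n\<close>, so finitely many regions
  give exponential decay. Near a point with \<open>x \<noteq> 0\<close> one uses
  \<open>x\<^sup>2 / (2 y) = max\<^sub>t (t x - t\<^sup>2 y / 2)\<close> and \<open>\<integral> exp (t z - t\<^sup>2 z\<^sup>2 / 2) d\<rho> < 1\<close>, which holds for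
  symmetric \<open>\<rho>\<close> because \<open>cosh u < exp (u\<^sup>2 / 2)\<close>. Near \<open>(0, y)\<close> with \<open>y \<noteq> \<sigma>\<^sup>2\<close> one uses
  \<open>\<plusminus>v (z\<^sup>2 - y)\<close>, whose exponential moment is \<open>< 1\<close> for small \<open>v\<close> by a second order expansion.
  Near \<open>y = 0\<close>, Cauchy--Schwarz gives \<open>x\<^sup>2 \<le> y \<cdot> #{i. X\<^sub>i \<noteq> 0} / n\<close>, and for large \<open>y\<close> the bound
  \<open>x\<^sup>2 \<le> y\<close> meets the exponential moment of \<open>z\<^sup>2\<close>. The remaining part of the closed set is
  compact and is covered by finitely many of the local pieces.
\<close>

lemma tanh_real_lt_self: "x > 0 \<Longrightarrow> tanh x < (x::real)"
proof -
  assume x: "x > 0"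
  have "(\<lambda>s. s - tanh s) 0 < (\<lambda>s. s - tanh s) x"
  proof (rule DERIV_pos_imp_increasing_open[OF x])
    fix s :: real assume s: "0 < s" "s < x"
    have "DERIV (\<lambda>s. s - tanh s) s :> 1 - (1 - tanh s ^ 2)"
      by (auto intro!: derivative_eq_intros)
    moreover have "1 - (1 - tanh s ^ 2) > 0" using s by simp
    ultimately show "\<exists>y. DERIV (\<lambda>s. s - tanh s) s :> y \<and> 0 < y" by blast
  qed (intro continuous_intros; auto)
  then show ?thesis by simp
qed

lemma ln_cosh_lt_half_square: "x > 0 \<Longrightarrow> ln (cosh x) < (x::real)\<^sup>2 / 2"
proof -
  assume x: "x > 0"
  have "(\<lambda>s. s\<^sup>2 / 2 - ln (cosh s)) 0 < (\<lambda>s. s\<^sup>2 / 2 - ln (cosh s)) x"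
  proof (rule DERIV_pos_imp_increasing_open[OF x])
    fix s :: real assume s: "0 < s" "s < x"
    have "DERIV (\<lambda>s. s\<^sup>2 / 2 - ln (cosh s)) s :> s - sinh s / cosh s"
      by (auto intro!: derivative_eq_intros simp: field_simps)
    moreover have "s - sinh s / cosh s > 0"
      using tanh_real_lt_self[OF s(1)] by (simp add: tanh_def)
    ultimately show "\<exists>y. DERIV (\<lambda>s. s\<^sup>2 / 2 - ln (cosh s)) s :> y \<and> 0 < y" by blast
  qed (intro continuous_intros; auto)
  then show ?thesis by simp
qed

lemma cosh_lt_exp_half_square: "x \<noteq> 0 \<Longrightarrow> cosh x < exp ((x::real)\<^sup>2 / 2)"
proof -
  assume "x \<noteq> 0"
  then have "ln (cosh x) < x\<^sup>2 / 2" using ln_cosh_lt_half_square[of "\<bar>x\<bar>"] by simp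
  then show ?thesis by (metis cosh_real_pos exp_less_mono exp_ln)
qed

lemma cosh_le_exp_half_square: "cosh x \<le> exp ((x::real)\<^sup>2 / 2)"
  by (cases "x = 0") (auto intro: less_imp_le cosh_lt_exp_half_square)

lemma exp_le_quadratic: "s \<ge> 0 \<Longrightarrow> exp s \<le> 1 + s + s\<^sup>2 * exp (s::real)"
proof -
  assume s: "s \<ge> 0"
  have "exp s * (1 - s) \<le> 1"
    using mult_left_mono[OF exp_ge_add_one_self[of "-s"], of "exp s"] by (simp add: exp_minus field_simps)
  then have "exp s - 1 - s \<le> s * (exp s - 1)" by (simp add: algebra_simps)
  also have "\<dots> \<le> s * (s * exp s)"
    using s mult_left_mono[OF exp_ge_add_one_self[of "-s"], of "exp s"]
    by (intro mult_left_mono) (auto simp: exp_minus field_simps)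
  finally show ?thesis by (simp add: power2_eq_square algebra_simps)
qed

lemma exp_neg_le_quadratic: "s \<ge> 0 \<Longrightarrow> exp (- s) \<le> 1 - s + (s::real)\<^sup>2"
proof -
  assume s: "s \<ge> 0"
  have "exp (- s) * (1 + s) \<le> 1"
    using mult_left_mono[OF exp_ge_add_one_self[of s], of "exp (-s)"] by (simp add: exp_minus field_simps)
  then have "exp (- s) - 1 + s \<le> s * (1 - exp (- s))" by (simp add: algebra_simps)
  also have "\<dots> \<le> s * s" using exp_ge_add_one_self[of "-s"] s by (intro mult_left_mono) auto
  finally show ?thesis by (simp add: power2_eq_square algebra_simps)
qed

lemma power4_le_exp_mult_square:
  fixes z \<epsilon> :: real assumes "\<epsilon> > 0" shows "z ^ 4 \<le> 16 / \<epsilon>\<^sup>2 * exp (\<epsilon> * z\<^sup>2 / 2)"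
proof -
  define u where "u = \<epsilon> * z\<^sup>2 / 2"
  have u: "u \<ge> 0" using assms by (simp add: u_def)
  have "u / 2 \<le> exp (u / 2)" using exp_ge_add_one_self[of "u/2"] by linarith
  then have "(u / 2)\<^sup>2 \<le> (exp (u / 2))\<^sup>2" using u by (intro power_mono) auto
  also have "\<dots> = exp u" by (simp add: power2_eq_square flip: exp_add)
  finally have "\<epsilon>\<^sup>2 * z ^ 4 / 16 \<le> exp u"
    by (simp add: u_def power2_eq_square power4_eq_xxxx field_simps)
  then show ?thesis using assms by (simp add: u_def field_simps)
qed

section \<open>Covering the exponent by additive functionals\<close>

definition exp_moment_lt_1 :: "real measure \<Rightarrow> (real \<Rightarrow> real) \<Rightarrow> bool" where
  "exp_moment_lt_1 \<rho> h \<longleftrightarrow>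
     h \<in> borel_measurable borel \<and> integrable \<rho> (\<lambda>z. exp (h z)) \<and> (\<integral>z. exp (h z) \<partial>\<rho>) < 1"

lemma exp_moment_lt_1_add_const:
  assumes "h \<in> borel_measurable borel" "integrable \<rho> (\<lambda>z. exp (h z))" "(\<integral>z. exp (h z) \<partial>\<rho>) < exp (- c)"
  shows "exp_moment_lt_1 \<rho> (\<lambda>z. h z + c)"
proof -
  have "(\<integral>z. exp (h z + c) \<partial>\<rho>) = exp c * (\<integral>z. exp (h z) \<partial>\<rho>)"
    by (simp add: exp_add mult.commute)
  also have "\<dots> < exp c * exp (- c)" using assms(3) by simp
  also have "\<dots> = 1" by (simp flip: exp_add)
  finally show ?thesis
    using assms(1,2) integrable_mult_left[OF assms(2), of "exp c"]
    by (simp add: exp_moment_lt_1_def exp_add mult.commute flip: exp_minus)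
qed

lemma exp_moment_lt_1_slack:
  assumes "exp_moment_lt_1 \<rho> h" shows "\<exists>\<gamma>>0. exp_moment_lt_1 \<rho> (\<lambda>z. h z + \<gamma>)"
proof -
  define I where "I = (\<integral>z. exp (h z) \<partial>\<rho>)"
  have I: "0 \<le> I" "I < 1" using assms by (auto simp: I_def exp_moment_lt_1_def)
  define \<gamma> where "\<gamma> = ln (2 / (1 + I))"
  have "\<gamma> > 0" using I by (simp add: \<gamma>_def less_divide_eq)
  moreover have "I < exp (- \<gamma>)" using I by (simp add: \<gamma>_def exp_minus field_simps)
  ultimately show ?thesis
    using assms exp_moment_lt_1_add_const[of h \<rho> \<gamma>] by (auto simp: exp_moment_lt_1_def I_def)
qed

definition empirical_point :: "nat \<Rightarrow> (nat \<Rightarrow> real) \<Rightarrow> real \<times> real" where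
  "empirical_point n X = ((\<Sum>i<n. X i) / real n, (\<Sum>i<n. (X i)\<^sup>2) / real n)"

definition exponent_covered :: "(real \<times> real) set \<Rightarrow> (real \<Rightarrow> real) set \<Rightarrow> bool" where
  "exponent_covered U F \<longleftrightarrow> (\<forall>n>0. \<forall>X. empirical_point n X \<in> U \<longrightarrow>
     (\<exists>h\<in>F. real n * (fst (empirical_point n X))\<^sup>2 / (2 * snd (empirical_point n X)) \<le> (\<Sum>i<n. h (X i))))"

lemma exponent_covered_mono:
  "exponent_covered U F \<Longrightarrow> V \<subseteq> U \<Longrightarrow> F \<subseteq> G \<Longrightarrow> exponent_covered V G"
  unfolding exponent_covered_def by blast

lemma exponent_covered_Un:
  "exponent_covered U F \<Longrightarrow> exponent_covered V G \<Longrightarrow> exponent_covered (U \<union> V) (F \<union> G)"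
  unfolding exponent_covered_def by blast

lemma exponent_covered_UN:
  "(\<And>i. i \<in> I \<Longrightarrow> exponent_covered (U i) (F i)) \<Longrightarrow> exponent_covered (\<Union>i\<in>I. U i) (\<Union>i\<in>I. F i)"
  unfolding exponent_covered_def by blast

lemma exponent_covered_quadratic:
  assumes U: "\<And>x y. (x, y) \<in> U \<Longrightarrow> x\<^sup>2 / (2 * y) \<le> \<alpha> * x + \<beta> * y + c"
    and h: "\<And>z. \<alpha> * z + \<beta> * z\<^sup>2 + c \<le> h z"
  shows "exponent_covered U {h}"
  unfolding exponent_covered_def
proof (intro allI impI)
  fix n :: nat and X :: "nat \<Rightarrow> real"
  assume n: "n > 0" and in_U: "empirical_point n X \<in> U"
  obtain x y where xy: "empirical_point n X = (x, y)" by fastforce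
  have sums: "(\<Sum>i<n. X i) = real n * x" "(\<Sum>i<n. (X i)\<^sup>2) = real n * y"
    using xy n by (auto simp: empirical_point_def)
  have "real n * x\<^sup>2 / (2 * y) = real n * (x\<^sup>2 / (2 * y))" by simp
  also have "\<dots> \<le> real n * (\<alpha> * x + \<beta> * y + c)" using U in_U xy by (intro mult_left_mono) auto
  also have "\<dots> = (\<Sum>i<n. \<alpha> * X i + \<beta> * (X i)\<^sup>2 + c)"
    by (simp add: sum.distrib sums flip: sum_distrib_left) (simp add: algebra_simps)
  also have "\<dots> \<le> (\<Sum>i<n. h (X i))" by (intro sum_mono h)
  finally show "\<exists>h'\<in>{h}. real n * (fst (empirical_point n X))\<^sup>2 / (2 * snd (empirical_point n X))
      \<le> (\<Sum>i<n. h' (X i))" by (simp add: xy)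
qed

lemma exponent_covered_near_zero:
  assumes "k \<ge> 0"
  shows "exponent_covered {p. 0 < snd p \<and> snd p \<le> \<eta>} {\<lambda>z. (if z = 0 then 0 else 1/2) + k * (\<eta> - z\<^sup>2)}"
  unfolding exponent_covered_def
proof (intro allI impI)
  fix n :: nat and X :: "nat \<Rightarrow> real"
  assume n: "n > 0" and in_U: "empirical_point n X \<in> {p. 0 < snd p \<and> snd p \<le> \<eta>}"
  define S1 where "S1 = (\<Sum>i<n. X i)"
  define S2 where "S2 = (\<Sum>i<n. (X i)\<^sup>2)"
  define N where "N = (\<Sum>i<n. if X i = 0 then 0 else 1::real)"
  have S2: "0 < S2" "S2 \<le> real n * \<eta>"
    using in_U n by (auto simp: empirical_point_def S2_def field_simps)
  \<comment> \<open>Cauchy--Schwarz, counting only the nonzero samples\<close>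
  have "S1\<^sup>2 = (\<Sum>i<n. (if X i = 0 then 0 else 1) * X i)\<^sup>2"
    unfolding S1_def by (intro arg_cong[where f="\<lambda>a. a\<^sup>2"] sum.cong) auto
  also have "\<dots> \<le> (\<Sum>i<n. (if X i = 0 then 0 else 1::real)\<^sup>2) * S2"
    unfolding S2_def by (rule Cauchy_Schwarz_ineq_sum)
  also have "(\<Sum>i<n. (if X i = 0 then 0 else 1::real)\<^sup>2) = N" unfolding N_def by (intro sum.cong) auto
  finally have cs: "S1\<^sup>2 \<le> N * S2" .
  have "real n * (fst (empirical_point n X))\<^sup>2 / (2 * snd (empirical_point n X)) = S1\<^sup>2 / (2 * S2)"
    using n by (simp add: empirical_point_def S1_def S2_def power2_eq_square field_simps)
  also have "\<dots> \<le> N * S2 / (2 * S2)" using cs S2 by (intro divide_right_mono) auto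
  also have "\<dots> \<le> N / 2 + k * (real n * \<eta> - S2)" using assms S2 by simp
  also have "\<dots> = (\<Sum>i<n. (if X i = 0 then 0 else 1/2) + k * (\<eta> - (X i)\<^sup>2))"
  proof -
    have "N / 2 = (\<Sum>i<n. if X i = 0 then 0 else 1/2)"
      unfolding N_def sum_divide_distrib by (intro sum.cong) auto
    moreover have "k * (real n * \<eta> - S2) = (\<Sum>i<n. k * (\<eta> - (X i)\<^sup>2))"
      by (simp add: S2_def sum_subtractf flip: sum_distrib_left)
    ultimately show ?thesis by (simp add: sum.distrib)
  qed
  finally show "\<exists>h\<in>{\<lambda>z. (if z = 0 then 0 else 1/2) + k * (\<eta> - z\<^sup>2)}.
      real n * (fst (empirical_point n X))\<^sup>2 / (2 * snd (empirical_point n X)) \<le> (\<Sum>i<n. h (X i))"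
    by simp
qed

lemma exponent_covered_open_nbhd:
  assumes h: "exp_moment_lt_1 \<rho> h" and quadratic: "\<And>z. \<alpha> * z + \<beta> * z\<^sup>2 + c \<le> h z"
    and y0: "y0 > 0" and at_p: "x0\<^sup>2 / (2 * y0) \<le> \<alpha> * x0 + \<beta> * y0 + c"
  shows "\<exists>U h'. open U \<and> (x0, y0) \<in> U \<and> exp_moment_lt_1 \<rho> h' \<and> exponent_covered U {h'}"
proof -
  obtain \<gamma> where "\<gamma> > 0" and h\<gamma>: "exp_moment_lt_1 \<rho> (\<lambda>z. h z + \<gamma>)"
    using exp_moment_lt_1_slack[OF h] by blast
  define U where "U = {p. 0 < snd p} \<inter> {p. (fst p)\<^sup>2 < 2 * snd p * (\<alpha> * fst p + \<beta> * snd p + c + \<gamma>)}"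
  have "open U" unfolding U_def by (intro open_Int open_Collect_less continuous_intros)
  moreover have "(x0, y0) \<in> U"
  proof -
    have "x0\<^sup>2 \<le> 2 * y0 * (\<alpha> * x0 + \<beta> * y0 + c)" using at_p y0 by (simp add: divide_le_eq mult.commute)
    then show ?thesis using y0 mult_pos_pos[OF y0 \<open>\<gamma> > 0\<close>] by (simp add: U_def algebra_simps)
  qed
  moreover have "exponent_covered U {\<lambda>z. h z + \<gamma>}"
  proof (rule exponent_covered_quadratic)
    show "x\<^sup>2 / (2 * y) \<le> \<alpha> * x + \<beta> * y + (c + \<gamma>)" if "(x, y) \<in> U" for x y
      using that by (simp add: U_def divide_le_eq algebra_simps)
    show "\<alpha> * z + \<beta> * z\<^sup>2 + (c + \<gamma>) \<le> h z + \<gamma>" for z using quadratic[of z] by simp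
  qed
  ultimately show ?thesis using h\<gamma> by blast
qed

lemma exponent_covered_compact:
  assumes "compact K"
    and local: "\<And>p. p \<in> K \<Longrightarrow> \<exists>U h. open U \<and> p \<in> U \<and> P h \<and> exponent_covered U {h}"
  shows "\<exists>F. finite F \<and> (\<forall>h\<in>F. P h) \<and> exponent_covered K F"
proof -
  obtain U h where Uh: "\<And>p. p \<in> K \<Longrightarrow> open (U p) \<and> p \<in> U p \<and> P (h p) \<and> exponent_covered (U p) {h p}"
    using local by metis
  obtain K' where K': "K' \<subseteq> K" "finite K'" "K \<subseteq> (\<Union>p\<in>K'. U p)"
    using compactE_image[OF \<open>compact K\<close>, of K U] Uh by blast
  have "exponent_covered (\<Union>p\<in>K'. U p) (\<Union>p\<in>K'. {h p})"
    using K'(1) Uh by (intro exponent_covered_UN) blast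
  then show ?thesis
    using K' Uh by (intro exI[of _ "h ` K'"]) (auto elim: exponent_covered_mono)
qed

lemma bounded_parabola_below: "bounded {p :: real \<times> real. (fst p)\<^sup>2 \<le> snd p \<and> snd p \<le> Y}"
proof -
  have "norm p \<le> sqrt (\<bar>Y\<bar> + Y\<^sup>2)" if "(fst p)\<^sup>2 \<le> snd p" "snd p \<le> Y" for p :: "real \<times> real"
  proof -
    have "0 \<le> snd p" using that(1) zero_le_power2[of "fst p"] by linarith
    with that have "(snd p)\<^sup>2 \<le> Y\<^sup>2" by (intro power_mono) auto
    with that have "(fst p)\<^sup>2 + (snd p)\<^sup>2 \<le> \<bar>Y\<bar> + Y\<^sup>2" by linarith
    then show ?thesis by (simp add: norm_prod_def real_sqrt_le_iff)
  qed
  then show ?thesis unfolding bounded_iff by blast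
qed

lemma Delta_star_snd_pos:
  assumes "p \<in> Delta_star" shows "0 < snd p"
proof (rule ccontr)
  obtain x y where p: "p = (x, y)" "x\<^sup>2 \<le> y" "(x, y) \<noteq> (0, 0)"
    using assms by (auto simp: Delta_star_def Delta_def)
  assume "\<not> 0 < snd p"
  with p have "y \<le> 0" by simp
  with p(2) have "y = 0" using zero_le_power2[of x] by linarith
  with p show False by simp
qed

lemma Delta_star_sets: "Delta_star \<in> sets borel"
proof -
  have "Delta = {p :: real \<times> real. (fst p)\<^sup>2 \<le> snd p}" by (auto simp: Delta_def)
  also have "\<dots> \<in> sets borel" by (intro borel_closed closed_Collect_le continuous_intros)
  finally show ?thesis unfolding Delta_star_def by (intro sets.Diff) (auto intro: borel_closed)
qed

lemma nn_integral_nu_tilde_le_sum_power: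
  fixes \<rho> :: "real measure"
  assumes "prob_space \<rho>" and sets_\<rho>: "sets \<rho> = sets borel"
    and S: "S \<in> sets borel" and F: "finite F" and F_meas: "\<And>h. h \<in> F \<Longrightarrow> h \<in> borel_measurable borel"
    and covered: "exponent_covered S F" and n: "n > 0"
  shows "(\<integral>\<^sup>+ p. indicator S p * ennreal (exp (real n * (fst p)\<^sup>2 / (2 * snd p))) \<partial>nu_tilde n \<rho>)
          \<le> (\<Sum>h\<in>F. (\<integral>\<^sup>+ z. ennreal (exp (h z)) \<partial>\<rho>) ^ n)"
proof -
  interpret prob_space \<rho> by fact
  interpret product_prob_space "\<lambda>_. \<rho>" "{..<n}" by unfold_locales
  have F_meas': "h \<in> borel_measurable \<rho>" if "h \<in> F" for h
    using F_meas[OF that] by (simp add: measurable_cong_sets[OF sets_\<rho> refl])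
  have T_meas: "empirical_point n \<in> measurable (PiM {..<n} (\<lambda>_. \<rho>)) borel"
    unfolding empirical_point_def using sets_\<rho> by measurable
  have [measurable]: "(fst :: real \<times> real \<Rightarrow> real) \<in> borel_measurable borel"
    "(snd :: real \<times> real \<Rightarrow> real) \<in> borel_measurable borel"
    by (intro borel_measurable_continuous_onI continuous_intros)+
  have "(\<integral>\<^sup>+ p. indicator S p * ennreal (exp (real n * (fst p)\<^sup>2 / (2 * snd p))) \<partial>nu_tilde n \<rho>)
     = (\<integral>\<^sup>+ X. indicator S (empirical_point n X) * ennreal (exp (real n * (fst (empirical_point n X))\<^sup>2
          / (2 * snd (empirical_point n X)))) \<partial>PiM {..<n} (\<lambda>_. \<rho>))"
    unfolding nu_tilde_def empirical_point_def[symmetric]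
    by (rule nn_integral_distr[OF T_meas]) (use S in measurable)
  also have "\<dots> \<le> (\<integral>\<^sup>+ X. (\<Sum>h\<in>F. \<Prod>i\<in>{..<n}. ennreal (exp (h (X i)))) \<partial>PiM {..<n} (\<lambda>_. \<rho>))"
  proof (rule nn_integral_mono)
    fix X
    show "indicator S (empirical_point n X) * ennreal (exp (real n * (fst (empirical_point n X))\<^sup>2
          / (2 * snd (empirical_point n X)))) \<le> (\<Sum>h\<in>F. \<Prod>i\<in>{..<n}. ennreal (exp (h (X i))))"
    proof (cases "empirical_point n X \<in> S")
      case True
      with covered n obtain h where "h \<in> F"
        and h: "real n * (fst (empirical_point n X))\<^sup>2 / (2 * snd (empirical_point n X)) \<le> (\<Sum>i<n. h (X i))"
        unfolding exponent_covered_def by blast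
      from h have "ennreal (exp (real n * (fst (empirical_point n X))\<^sup>2 / (2 * snd (empirical_point n X))))
          \<le> (\<Prod>i\<in>{..<n}. ennreal (exp (h (X i))))"
        by (simp add: prod_ennreal ennreal_leI flip: exp_sum)
      also have "\<dots> \<le> (\<Sum>h\<in>F. \<Prod>i\<in>{..<n}. ennreal (exp (h (X i))))"
        by (rule member_le_sum[OF \<open>h \<in> F\<close>]) (auto simp: F)
      finally show ?thesis using True by simp
    qed simp
  qed
  also have "\<dots> = (\<Sum>h\<in>F. \<integral>\<^sup>+ X. (\<Prod>i\<in>{..<n}. ennreal (exp (h (X i)))) \<partial>PiM {..<n} (\<lambda>_. \<rho>))"
    by (rule nn_integral_sum) (use F_meas' in measurable)
  also have "\<dots> = (\<Sum>h\<in>F. (\<integral>\<^sup>+ z. ennreal (exp (h z)) \<partial>\<rho>) ^ n)"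
    by (intro sum.cong refl) (subst product_nn_integral_prod; use F_meas' in auto)
  finally show ?thesis .
qed

lemma limsup_scaled_eln_le:
  fixes I :: "nat \<Rightarrow> ennreal"
  assumes I: "\<And>n. n > 0 \<Longrightarrow> I n \<le> ennreal (K * r ^ n)" and "K > 0" "r > 0"
  shows "limsup (\<lambda>n. ereal (1 / real n) * eln (I n)) \<le> ereal (ln r)"
proof -
  have "eventually (\<lambda>n. ereal (1 / real n) * eln (I n) \<le> ereal (ln K / real n + ln r)) sequentially"
    using eventually_gt_at_top[of 0]
  proof eventually_elim
    case (elim n)
    show ?case
    proof (cases "I n = 0")
      case False
      have "I n \<noteq> \<infinity>" using I[OF elim] by (auto simp: top_unique)
      with False have pos: "0 < enn2real (I n)"
        by (simp add: enn2real_positive_iff less_top zero_less_iff_neq_zero)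
      have "enn2real (I n) \<le> K * r ^ n"
        using I[OF elim] assms(2,3) by (simp add: enn2real_leI)
      then have "ln (enn2real (I n)) \<le> ln K + real n * ln r"
        using pos assms(2,3) by (simp add: ln_mult ln_realpow flip: ln_le_cancel_iff)
      then have "ln (enn2real (I n)) / real n \<le> ln K / real n + ln r"
        using elim by (simp add: field_simps)
      then show ?thesis using False \<open>I n \<noteq> \<infinity>\<close> elim by (simp add: eln_def)
    qed (use elim in \<open>simp add: eln_def\<close>)
  qed
  then have "limsup (\<lambda>n. ereal (1 / real n) * eln (I n)) \<le> limsup (\<lambda>n. ereal (ln K / real n + ln r))"
    by (rule Limsup_mono)
  also have "\<dots> = ereal (ln r)"
  proof (intro lim_imp_Limsup trivial_limit_sequentially tendsto_ereal)
    show "(\<lambda>n. ln K / real n + ln r) \<longlonglongrightarrow> ln r"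
      using tendsto_add[OF tendsto_divide_0[OF tendsto_const filterlim_real_sequentially
            [THEN filterlim_at_top_imp_at_infinity]] tendsto_const[of "ln r"]] by simp
  qed
  finally show ?thesis .
qed

section \<open>Symmetric laws with an exponential square moment\<close>

locale symmetric_subgaussian = prob_space \<rho> for \<rho> :: "real measure" +
  fixes \<epsilon> :: real
  assumes sets_\<rho>: "sets \<rho> = sets borel"
    and symmetric: "distr \<rho> borel uminus = \<rho>"
    and \<epsilon>_pos: "\<epsilon> > 0"
    and exp_square_finite: "(\<integral>\<^sup>+ z. ennreal (exp (\<epsilon> * z\<^sup>2)) \<partial>\<rho>) < \<infinity>"
    and second_moment_pos: "(\<integral>z. z\<^sup>2 \<partial>\<rho>) > 0"
begin

lemma borel_measurable_\<rho>: "f \<in> borel_measurable borel \<Longrightarrow> f \<in> borel_measurable \<rho>"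
  by (simp add: measurable_cong_sets[OF sets_\<rho> refl])

lemma integrable_bounded:
  fixes f :: "real \<Rightarrow> real"
  shows "f \<in> borel_measurable borel \<Longrightarrow> (\<And>z. \<bar>f z\<bar> \<le> B) \<Longrightarrow> integrable \<rho> f"
  by (intro integrable_const_bound[where B=B] borel_measurable_\<rho>) auto

lemma integrable_exp_mult_square: "v \<le> \<epsilon> \<Longrightarrow> integrable \<rho> (\<lambda>z. exp (v * z\<^sup>2))"
proof (rule Bochner_Integration.integrable_bound)
  show "integrable \<rho> (\<lambda>z. exp (\<epsilon> * z\<^sup>2))"
    by (rule integrableI_bounded) (use exp_square_finite in \<open>auto intro!: borel_measurable_\<rho>\<close>)
qed (auto intro!: borel_measurable_\<rho> mult_right_mono)

lemma integrable_power4: "integrable \<rho> (\<lambda>z. z ^ 4)"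
proof (rule Bochner_Integration.integrable_bound)
  show "integrable \<rho> (\<lambda>z. 16 / \<epsilon>\<^sup>2 * exp (\<epsilon> / 2 * z\<^sup>2))"
    using \<epsilon>_pos by (intro integrable_mult_right integrable_exp_mult_square) simp
  show "AE z in \<rho>. norm (z ^ 4) \<le> norm (16 / \<epsilon>\<^sup>2 * exp (\<epsilon> / 2 * z\<^sup>2))"
    using power4_le_exp_mult_square[OF \<epsilon>_pos] by (simp add: mult.commute)
qed (auto intro!: borel_measurable_\<rho>)

lemma integrable_square: "integrable \<rho> (\<lambda>z. z\<^sup>2)"
proof (rule Bochner_Integration.integrable_bound)
  show "integrable \<rho> (\<lambda>z. z ^ 4 + 1)" using integrable_power4 by simp
  have "z\<^sup>2 \<le> z ^ 4 + 1" for z :: real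
  proof -
    have "2 * z\<^sup>2 \<le> z ^ 4 + 1"
      using sum_power2_ge_zero[of "z\<^sup>2 - 1" 0] by (simp add: power2_eq_square power4_eq_xxxx algebra_simps)
    then show ?thesis using zero_le_power2[of z] by linarith
  qed
  then show "AE z in \<rho>. norm (z\<^sup>2) \<le> norm (z ^ 4 + 1)" by simp
qed (auto intro!: borel_measurable_\<rho>)

lemma integral_reflect_eq:
  fixes f :: "real \<Rightarrow> real"
  assumes "f \<in> borel_measurable borel" shows "(\<integral>z. f (- z) \<partial>\<rho>) = (\<integral>z. f z \<partial>\<rho>)"
proof -
  have "(\<integral>z. f z \<partial>distr \<rho> borel uminus) = (\<integral>z. f (- z) \<partial>\<rho>)"
    by (rule integral_distr) (auto intro: borel_measurable_\<rho> assms)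
  then show ?thesis using symmetric by simp
qed

lemma integral_lt_1_off_zero:
  fixes g :: "real \<Rightarrow> real"
  assumes g: "g \<in> borel_measurable borel" "\<And>z. 0 \<le> g z" "\<And>z. g z \<le> 1"
    and lt: "\<And>z. z \<noteq> 0 \<Longrightarrow> g z < 1"
  shows "(\<integral>z. g z \<partial>\<rho>) < 1"
proof -
  have int: "integrable \<rho> (\<lambda>z. 1 - g z)"
    by (rule integrable_bounded[where B=1]) (use g in \<open>auto simp: borel_measurable_diff\<close>)
  have "(\<integral>z. 1 - g z \<partial>\<rho>) \<noteq> 0"
  proof
    assume "(\<integral>z. 1 - g z \<partial>\<rho>) = 0"
    then have "AE z in \<rho>. 1 - g z = 0" using integral_nonneg_eq_0_iff_AE[OF int] g by simp
    then have "AE z in \<rho>. z\<^sup>2 = 0" by eventually_elim (use lt in force)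
    then have "(\<integral>z. z\<^sup>2 \<partial>\<rho>) = 0" by (simp add: integral_eq_zero_AE)
    then show False using second_moment_pos by simp
  qed
  moreover have "(\<integral>z. 1 - g z \<partial>\<rho>) \<ge> 0" using g by (intro integral_nonneg_AE) auto
  moreover have "integrable \<rho> g" by (rule integrable_bounded[where B=1]) (use g in auto)
  ultimately show ?thesis by (simp add: prob_space)
qed

lemma exp_moment_lt_1_gaussian_tilt:
  assumes "t \<noteq> 0" shows "exp_moment_lt_1 \<rho> (\<lambda>z. t * z - t\<^sup>2 * z\<^sup>2 / 2)"
proof -
  let ?f = "\<lambda>z. exp (t * z - t\<^sup>2 * z\<^sup>2 / 2)"
  have f_meas: "?f \<in> borel_measurable borel" by measurable
  have "t * z - t\<^sup>2 * z\<^sup>2 / 2 \<le> 1/2" for z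
    using sum_power2_ge_zero[of "t * z - 1" 0] by (simp add: power2_eq_square algebra_simps)
  then have f_bounded: "\<bar>?f z\<bar> \<le> exp (1/2)" for z by simp
  have f_int: "integrable \<rho> ?f" by (rule integrable_bounded[OF f_meas f_bounded])
  have f_refl_int: "integrable \<rho> (\<lambda>z. ?f (- z))"
    by (rule integrable_bounded[where B="exp (1/2)"], measurable, rule f_bounded)
  have cosh_exp_le_1: "cosh (t * z) * exp (- (t\<^sup>2 * z\<^sup>2 / 2)) \<le> 1" for z
    using mult_right_mono[OF cosh_le_exp_half_square[of "t * z"], of "exp (- (t\<^sup>2 * z\<^sup>2 / 2))"]
    by (simp add: power_mult_distrib flip: exp_add)
  have "cosh (t * z) * exp (- (t\<^sup>2 * z\<^sup>2 / 2)) < 1" if "z \<noteq> 0" for z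
    using mult_strict_right_mono[OF cosh_lt_exp_half_square[of "t * z"], of "exp (- (t\<^sup>2 * z\<^sup>2 / 2))"]
      assms that by (simp add: power_mult_distrib flip: exp_add)
  then have "(\<integral>z. cosh (t * z) * exp (- (t\<^sup>2 * z\<^sup>2 / 2)) \<partial>\<rho>) < 1"
    using cosh_exp_le_1 by (intro integral_lt_1_off_zero) (auto intro!: borel_measurable_continuous_onI continuous_intros)
  \<comment> \<open>by symmetry of \<open>\<rho>\<close>, \<open>?f\<close> integrates like its even part\<close>
  also have "(\<lambda>z. cosh (t * z) * exp (- (t\<^sup>2 * z\<^sup>2 / 2))) = (\<lambda>z. (?f z + ?f (- z)) / 2)"
    by (simp add: cosh_field_def field_simps flip: exp_add)
  also have "(\<integral>z. (?f z + ?f (- z)) / 2 \<partial>\<rho>) = (\<integral>z. ?f z \<partial>\<rho>)"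
    using f_int f_refl_int integral_reflect_eq[OF f_meas] by simp
  finally show ?thesis using f_int by (simp add: exp_moment_lt_1_def)
qed

lemma integral_exp_mult_square_le:
  assumes "0 \<le> v" "v \<le> \<epsilon> / 2"
  shows "(\<integral>z. exp (v * z\<^sup>2) \<partial>\<rho>)
    \<le> 1 + v * (\<integral>z. z\<^sup>2 \<partial>\<rho>) + v\<^sup>2 * (16 / \<epsilon>\<^sup>2 * (\<integral>z. exp (\<epsilon> * z\<^sup>2) \<partial>\<rho>))"
proof -
  have "exp (v * z\<^sup>2) \<le> 1 + v * z\<^sup>2 + v\<^sup>2 * (16 / \<epsilon>\<^sup>2 * exp (\<epsilon> * z\<^sup>2))" for z
  proof -
    have "exp (v * z\<^sup>2) \<le> 1 + v * z\<^sup>2 + v\<^sup>2 * (z ^ 4 * exp (v * z\<^sup>2))"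
      using exp_le_quadratic[of "v * z\<^sup>2"] assms
      by (simp add: power_mult_distrib power4_eq_xxxx power2_eq_square ac_simps)
    also have "z ^ 4 * exp (v * z\<^sup>2) \<le> 16 / \<epsilon>\<^sup>2 * exp (\<epsilon> * z\<^sup>2 / 2) * exp (\<epsilon> * z\<^sup>2 / 2)"
    proof (intro mult_mono power4_le_exp_mult_square \<epsilon>_pos)
      show "exp (v * z\<^sup>2) \<le> exp (\<epsilon> * z\<^sup>2 / 2)" using mult_right_mono[OF assms(2), of "z\<^sup>2"] by simp
    qed auto
    also have "\<dots> = 16 / \<epsilon>\<^sup>2 * exp (\<epsilon> * z\<^sup>2)" by (simp flip: exp_add)
    finally show ?thesis by (simp add: mult_left_mono)
  qed
  then have "(\<integral>z. exp (v * z\<^sup>2) \<partial>\<rho>) \<le> (\<integral>z. 1 + v * z\<^sup>2 + v\<^sup>2 * (16 / \<epsilon>\<^sup>2 * exp (\<epsilon> * z\<^sup>2)) \<partial>\<rho>)"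
    using assms integrable_square integrable_exp_mult_square[of \<epsilon>] integrable_exp_mult_square[of v] \<epsilon>_pos
    by (intro integral_mono) auto
  also have "\<dots> = 1 + v * (\<integral>z. z\<^sup>2 \<partial>\<rho>) + v\<^sup>2 * (16 / \<epsilon>\<^sup>2 * (\<integral>z. exp (\<epsilon> * z\<^sup>2) \<partial>\<rho>))"
    using integrable_square integrable_exp_mult_square[of \<epsilon>] by (simp add: prob_space)
  finally show ?thesis .
qed

lemma integral_exp_neg_mult_square_le:
  assumes "0 \<le> v"
  shows "(\<integral>z. exp (- (v * z\<^sup>2)) \<partial>\<rho>) \<le> 1 - v * (\<integral>z. z\<^sup>2 \<partial>\<rho>) + v\<^sup>2 * (\<integral>z. z ^ 4 \<partial>\<rho>)"
proof -
  have "exp (- (v * z\<^sup>2)) \<le> 1 - v * z\<^sup>2 + v\<^sup>2 * z ^ 4" for z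
    using exp_neg_le_quadratic[of "v * z\<^sup>2"] assms
    by (simp add: power_mult_distrib power4_eq_xxxx power2_eq_square ac_simps)
  then have "(\<integral>z. exp (- (v * z\<^sup>2)) \<partial>\<rho>) \<le> (\<integral>z. 1 - v * z\<^sup>2 + v\<^sup>2 * z ^ 4 \<partial>\<rho>)"
    using assms integrable_square integrable_power4
    by (intro integral_mono) (auto intro!: integrable_bounded[where B=1])
  also have "\<dots> = 1 - v * (\<integral>z. z\<^sup>2 \<partial>\<rho>) + v\<^sup>2 * (\<integral>z. z ^ 4 \<partial>\<rho>)"
    using integrable_square integrable_power4 by (simp add: prob_space)
  finally show ?thesis .
qed

lemma exp_moment_lt_1_above_second_moment:
  assumes "c > (\<integral>z. z\<^sup>2 \<partial>\<rho>)"
  shows "\<exists>v>0. exp_moment_lt_1 \<rho> (\<lambda>z. v * z\<^sup>2 - v * c)"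
proof -
  define s2 where "s2 = (\<integral>z. z\<^sup>2 \<partial>\<rho>)"
  define C where "C = 16 / \<epsilon>\<^sup>2 * (\<integral>z. exp (\<epsilon> * z\<^sup>2) \<partial>\<rho>)"
  have "C \<ge> 0" unfolding C_def by (intro mult_nonneg_nonneg integral_nonneg_AE) auto
  define v where "v = min (\<epsilon> / 2) ((c - s2) / (2 * (C + 1)))"
  have "0 < (c - s2) / (2 * (C + 1))" using assms \<open>C \<ge> 0\<close> by (simp add: s2_def)
  moreover have "v \<le> \<epsilon> / 2" unfolding v_def by (rule min.cobounded1)
  ultimately have v: "0 < v" "v \<le> \<epsilon> / 2" using \<epsilon>_pos by (simp_all add: v_def)
  have "v * C \<le> v * (C + 1)" using v by simp
  also have "\<dots> \<le> (c - s2) / (2 * (C + 1)) * (C + 1)"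
    using \<open>C \<ge> 0\<close> by (intro mult_right_mono) (simp_all add: v_def)
  also have "\<dots> = (c - s2) / 2" using \<open>C \<ge> 0\<close> by (simp add: field_simps)
  finally have vC: "v * C \<le> (c - s2) / 2" .
  have "(\<integral>z. exp (v * z\<^sup>2) \<partial>\<rho>) \<le> 1 + v * s2 + v * (v * C)"
    using integral_exp_mult_square_le[of v] v by (simp add: s2_def C_def power2_eq_square)
  also have "\<dots> \<le> 1 + v * s2 + v * ((c - s2) / 2)"
    using vC v by (intro add_left_mono mult_left_mono) auto
  also have "\<dots> < 1 + v * c"
  proof -
    have "v * s2 < v * c" using v assms by (simp add: s2_def)
    then show ?thesis by (simp add: field_simps)
  qed
  also have "\<dots> \<le> exp (v * c)" by (rule exp_ge_add_one_self)
  finally show ?thesis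
    using exp_moment_lt_1_add_const[of "\<lambda>z. v * z\<^sup>2" \<rho> "- (v * c)"] integrable_exp_mult_square v
    by (intro exI[of _ v]) auto
qed

lemma exp_moment_lt_1_below_second_moment:
  assumes "c < (\<integral>z. z\<^sup>2 \<partial>\<rho>)"
  shows "\<exists>v>0. exp_moment_lt_1 \<rho> (\<lambda>z. v * c - v * z\<^sup>2)"
proof -
  define s2 where "s2 = (\<integral>z. z\<^sup>2 \<partial>\<rho>)"
  define D where "D = (\<integral>z. z ^ 4 \<partial>\<rho>)"
  have "D \<ge> 0" unfolding D_def by (intro integral_nonneg_AE) auto
  define v where "v = (s2 - c) / (2 * (D + 1))"
  have v: "v > 0" using assms \<open>D \<ge> 0\<close> by (simp add: v_def s2_def)
  have vD: "v * D \<le> (s2 - c) / 2"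
    using \<open>D \<ge> 0\<close> assms unfolding v_def s2_def by (simp add: field_simps)
  have "(\<integral>z. exp (- (v * z\<^sup>2)) \<partial>\<rho>) \<le> 1 - v * s2 + v * (v * D)"
    using integral_exp_neg_mult_square_le[of v] v by (simp add: s2_def D_def power2_eq_square)
  also have "\<dots> \<le> 1 - v * s2 + v * ((s2 - c) / 2)"
    using vD v by (intro add_left_mono mult_left_mono) auto
  also have "\<dots> < 1 - v * c"
  proof -
    have "v * c < v * s2" using v assms by (simp add: s2_def)
    then show ?thesis by (simp add: field_simps)
  qed
  also have "\<dots> \<le> exp (- (v * c))" using exp_ge_add_one_self[of "- (v * c)"] by simp
  finally show ?thesis
    using exp_moment_lt_1_add_const[of "\<lambda>z. - (v * z\<^sup>2)" \<rho> "v * c"] v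
      integrable_exp_mult_square[of "- v"] \<epsilon>_pos
    by (intro exI[of _ v]) auto
qed

lemma exp_moment_lt_1_exp_square: "\<exists>c. exp_moment_lt_1 \<rho> (\<lambda>z. \<epsilon> * z\<^sup>2 + c)"
proof -
  define B where "B = (\<integral>z. exp (\<epsilon> * z\<^sup>2) \<partial>\<rho>)"
  have "B \<ge> 0" unfolding B_def by (intro integral_nonneg_AE) auto
  then have "B < exp (ln (B + 1))" by simp
  then show ?thesis
    using exp_moment_lt_1_add_const[of "\<lambda>z. \<epsilon> * z\<^sup>2" \<rho> "- ln (B + 1)"] integrable_exp_mult_square[of \<epsilon>]
    by (intro exI[of _ "- ln (B + 1)"]) (simp add: B_def)
qed

lemma exp_moment_lt_1_off_zero: "\<exists>k>0. exp_moment_lt_1 \<rho> (\<lambda>z. (if z = 0 then 0 else 1/2) - k * z\<^sup>2)"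
proof -
  \<comment> \<open>these integrands decrease to the indicator of \<open>{0}\<close>, whose integral is \<open>< 1\<close>\<close>
  define s where "s i z = exp ((if z = 0 then 0 else 1/2) - real (Suc i) * z\<^sup>2)" for i z
  have s_meas: "s i \<in> borel_measurable borel" for i unfolding s_def by measurable
  have s_bounded: "\<bar>s i z\<bar> \<le> exp (1/2)" for i z by (simp add: s_def)
  have "(\<lambda>i. s i z) \<longlonglongrightarrow> indicator {0} z" for z
  proof (cases "z = 0")
    case False
    have "s i z = exp (1/2) * exp (real (Suc i) * - z\<^sup>2)" for i
      using False by (simp add: s_def algebra_simps flip: exp_add)
    then have "s i z = exp (1/2) * exp (- z\<^sup>2) ^ Suc i" for i by (simp only: exp_of_nat_mult)
    moreover have "(\<lambda>i. exp (1/2) * exp (- z\<^sup>2) ^ Suc i) \<longlonglongrightarrow> exp (1/2) * 0"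
      using False by (intro tendsto_mult tendsto_const LIMSEQ_power_zero[THEN LIMSEQ_Suc]) auto
    ultimately show ?thesis using False by simp
  qed (simp add: s_def)
  then have "(\<lambda>i. \<integral>z. s i z \<partial>\<rho>) \<longlonglongrightarrow> (\<integral>z. indicator {0} z \<partial>\<rho>)"
    by (intro integral_dominated_convergence[where w="\<lambda>_. exp (1/2)"])
       (use s_meas s_bounded in \<open>auto intro: borel_measurable_\<rho>\<close>)
  moreover have "(\<integral>z. indicator {0} z \<partial>\<rho>) < (1::real)"
    by (rule integral_lt_1_off_zero) auto
  ultimately have "eventually (\<lambda>i. (\<integral>z. s i z \<partial>\<rho>) < 1) sequentially"
    by (rule order_tendstoD(2))
  then obtain i where "(\<integral>z. s i z \<partial>\<rho>) < 1" by (auto simp: eventually_sequentially)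
  moreover have "integrable \<rho> (s i)" by (rule integrable_bounded[OF s_meas s_bounded])
  ultimately have "exp_moment_lt_1 \<rho> (\<lambda>z. (if z = 0 then 0 else 1/2) - real (Suc i) * z\<^sup>2)"
    unfolding exp_moment_lt_1_def s_def by (intro conjI) measurable
  then show ?thesis by (intro exI[of _ "real (Suc i)"]) simp
qed

lemma exponent_covered_near_point:
  assumes "(x0, y0) \<noteq> (0, \<integral>z. z\<^sup>2 \<partial>\<rho>)" and y0: "y0 > 0"
  shows "\<exists>U h. open U \<and> (x0, y0) \<in> U \<and> exp_moment_lt_1 \<rho> h \<and> exponent_covered U {h}"
proof -
  consider "x0 \<noteq> 0" | "x0 = 0" "y0 > (\<integral>z. z\<^sup>2 \<partial>\<rho>)" | "x0 = 0" "y0 < (\<integral>z. z\<^sup>2 \<partial>\<rho>)"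
    using assms(1) by fastforce
  then show ?thesis
  proof cases
    case 1
    define t where "t = x0 / y0"
    have "t \<noteq> 0" using 1 y0 by (simp add: t_def)
    \<comment> \<open>\<open>t\<close> attains the maximum in \<open>x\<^sup>2 / (2 y) = max\<^sub>t (t x - t\<^sup>2 y / 2)\<close> at \<open>(x0, y0)\<close>\<close>
    show ?thesis
    proof (rule exponent_covered_open_nbhd[OF exp_moment_lt_1_gaussian_tilt[OF \<open>t \<noteq> 0\<close>] _ y0,
          where \<alpha>=t and \<beta>="- t\<^sup>2 / 2" and c=0])
      show "x0\<^sup>2 / (2 * y0) \<le> t * x0 + - t\<^sup>2 / 2 * y0 + 0"
        using y0 by (simp add: t_def power2_eq_square field_simps)
    qed simp
  next
    case 2
    then obtain v where "exp_moment_lt_1 \<rho> (\<lambda>z. v * z\<^sup>2 - v * y0)"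
      using exp_moment_lt_1_above_second_moment by blast
    then show ?thesis
      by (rule exponent_covered_open_nbhd[OF _ _ y0, where \<alpha>=0 and \<beta>=v and c="- v * y0"]) (simp_all add: 2)
  next
    case 3
    then obtain v where "exp_moment_lt_1 \<rho> (\<lambda>z. v * y0 - v * z\<^sup>2)"
      using exp_moment_lt_1_below_second_moment by blast
    then show ?thesis
      by (rule exponent_covered_open_nbhd[OF _ _ y0, where \<alpha>=0 and \<beta>="- v" and c="v * y0"]) (simp_all add: 3)
  qed
qed

lemma exponent_covered_near_zero_strip:
  "\<exists>\<eta>>0. \<exists>h. exp_moment_lt_1 \<rho> h \<and> exponent_covered {p. 0 < snd p \<and> snd p \<le> \<eta>} {h}"
proof -
  obtain k where "k > 0" "exp_moment_lt_1 \<rho> (\<lambda>z. (if z = 0 then 0 else 1/2) - k * z\<^sup>2)"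
    using exp_moment_lt_1_off_zero by blast
  then obtain \<gamma> where "\<gamma> > 0" and h\<gamma>: "exp_moment_lt_1 \<rho> (\<lambda>z. (if z = 0 then 0 else 1/2) - k * z\<^sup>2 + \<gamma>)"
    using exp_moment_lt_1_slack by blast
  define h where "h z = (if z = 0 then 0 else 1/2) + k * (\<gamma> / k - z\<^sup>2)" for z :: real
  have "(\<lambda>z. (if z = 0 then 0 else 1/2) - k * z\<^sup>2 + \<gamma>) = h"
    using \<open>k > 0\<close> by (intro ext) (simp add: h_def right_diff_distrib)
  with h\<gamma> have "exp_moment_lt_1 \<rho> h" by simp
  moreover have "exponent_covered {p. 0 < snd p \<and> snd p \<le> \<gamma> / k} {h}"
    unfolding h_def using \<open>k > 0\<close> by (intro exponent_covered_near_zero) simp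
  ultimately show ?thesis using \<open>k > 0\<close> \<open>\<gamma> > 0\<close> by (intro exI[of _ "\<gamma> / k"]) auto
qed

lemma exponent_covered_far_strip:
  "\<exists>Y h. exp_moment_lt_1 \<rho> h \<and> exponent_covered {p. (fst p)\<^sup>2 \<le> snd p \<and> 0 < snd p \<and> Y \<le> snd p} {h}"
proof -
  obtain c where "exp_moment_lt_1 \<rho> (\<lambda>z. \<epsilon> * z\<^sup>2 + c)"
    using exp_moment_lt_1_exp_square by blast
  moreover have "exponent_covered {p. (fst p)\<^sup>2 \<le> snd p \<and> 0 < snd p \<and> (1/2 - c) / \<epsilon> \<le> snd p}
      {\<lambda>z. \<epsilon> * z\<^sup>2 + c}"
  proof (rule exponent_covered_quadratic[where \<alpha>=0 and \<beta>=\<epsilon> and c=c])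
    fix x y assume "(x, y) \<in> {p. (fst p)\<^sup>2 \<le> snd p \<and> 0 < snd p \<and> (1/2 - c) / \<epsilon> \<le> snd p}"
    then have "x\<^sup>2 \<le> y" "0 < y" "1/2 \<le> \<epsilon> * y + c" using \<epsilon>_pos by (auto simp: field_simps)
    then have "x\<^sup>2 / (2 * y) \<le> y / (2 * y)" by (intro divide_right_mono) auto
    also have "\<dots> = 1/2" using \<open>0 < y\<close> by simp
    finally show "x\<^sup>2 / (2 * y) \<le> 0 * x + \<epsilon> * y + c" using \<open>1/2 \<le> \<epsilon> * y + c\<close> by simp
  qed simp
  ultimately show ?thesis by blast
qed

lemma exponent_covered_Delta_star_Int:
  assumes "closed A" and "(0, \<integral>z. z\<^sup>2 \<partial>\<rho>) \<notin> A"
  shows "\<exists>F. finite F \<and> (\<forall>h\<in>F. exp_moment_lt_1 \<rho> h) \<and> exponent_covered (Delta_star \<inter> A) F"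
proof -
  obtain \<eta> hZ where "\<eta> > 0" "exp_moment_lt_1 \<rho> hZ" and Z: "exponent_covered {p. 0 < snd p \<and> snd p \<le> \<eta>} {hZ}"
    using exponent_covered_near_zero_strip by blast
  obtain Y hB where "exp_moment_lt_1 \<rho> hB"
    and B: "exponent_covered {p. (fst p)\<^sup>2 \<le> snd p \<and> 0 < snd p \<and> Y \<le> snd p} {hB}"
    using exponent_covered_far_strip by blast
  define K where "K = A \<inter> {p. (fst p)\<^sup>2 \<le> snd p \<and> snd p \<le> Y} \<inter> {p. \<eta> \<le> snd p}"
  have "bounded K" unfolding K_def by (rule bounded_subset[OF bounded_parabola_below]) blast
  moreover have "closed K"
    unfolding K_def by (intro closed_Int \<open>closed A\<close> closed_Collect_conj closed_Collect_le continuous_intros)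
  ultimately have "compact K" by (simp add: compact_eq_bounded_closed)
  moreover have "\<exists>U h. open U \<and> p \<in> U \<and> exp_moment_lt_1 \<rho> h \<and> exponent_covered U {h}" if "p \<in> K" for p
  proof -
    obtain x y where p: "p = (x, y)" by fastforce
    with that assms(2) have "(x, y) \<noteq> (0, \<integral>z. z\<^sup>2 \<partial>\<rho>)" "\<eta> \<le> y" by (auto simp: K_def)
    with \<open>\<eta> > 0\<close> show ?thesis using exponent_covered_near_point[of x y] p by simp
  qed
  ultimately obtain F where F: "finite F" "\<forall>h\<in>F. exp_moment_lt_1 \<rho> h" "exponent_covered K F"
    using exponent_covered_compact[of K] by blast
  have cover: "Delta_star \<inter> A \<subseteq> {p. 0 < snd p \<and> snd p \<le> \<eta>}
      \<union> {p. (fst p)\<^sup>2 \<le> snd p \<and> 0 < snd p \<and> Y \<le> snd p} \<union> K"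
  proof
    fix p assume p: "p \<in> Delta_star \<inter> A"
    then have "0 < snd p" "(fst p)\<^sup>2 \<le> snd p"
      using Delta_star_snd_pos by (auto simp: Delta_star_def Delta_def case_prod_beta)
    with p show "p \<in> {p. 0 < snd p \<and> snd p \<le> \<eta>} \<union> {p. (fst p)\<^sup>2 \<le> snd p \<and> 0 < snd p \<and> Y \<le> snd p} \<union> K"
      unfolding K_def by auto
  qed
  have "exponent_covered (Delta_star \<inter> A) ({hZ} \<union> {hB} \<union> F)"
    by (rule exponent_covered_mono[OF exponent_covered_Un[OF exponent_covered_Un[OF Z B] F(3)] cover order_refl])
  then show ?thesis using F \<open>exp_moment_lt_1 \<rho> hZ\<close> \<open>exp_moment_lt_1 \<rho> hB\<close>
    by (intro exI[of _ "{hZ} \<union> {hB} \<union> F"]) auto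
qed

lemma nn_integral_nu_tilde_exponential_decay:
  assumes "closed A" and "(0, \<integral>z. z\<^sup>2 \<partial>\<rho>) \<notin> A"
  shows "\<exists>K r. 0 < K \<and> 0 < r \<and> r < 1 \<and> (\<forall>n>0. (\<integral>\<^sup>+ p. indicator (Delta_star \<inter> A) p *
           ennreal (exp (real n * (fst p)\<^sup>2 / (2 * snd p))) \<partial>nu_tilde n \<rho>) \<le> ennreal (K * r ^ n))"
proof -
  obtain F where F: "finite F" "\<forall>h\<in>F. exp_moment_lt_1 \<rho> h" "exponent_covered (Delta_star \<inter> A) F"
    using exponent_covered_Delta_star_Int[OF assms] by blast
  define r where "r = Max (insert (1/2) ((\<lambda>h. \<integral>z. exp (h z) \<partial>\<rho>) ` F))"
  have r: "1/2 \<le> r" "r < 1"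
  proof -
    show "1/2 \<le> r" unfolding r_def using F(1) by (intro Max_ge) auto
    show "r < 1" using F by (auto simp: r_def exp_moment_lt_1_def)
  qed
  have "(\<integral>\<^sup>+ z. ennreal (exp (h z)) \<partial>\<rho>) ^ n \<le> ennreal (r ^ n)" if "h \<in> F" for h n
  proof -
    have "(\<integral>\<^sup>+ z. ennreal (exp (h z)) \<partial>\<rho>) = ennreal (\<integral>z. exp (h z) \<partial>\<rho>)"
      using F that by (intro nn_integral_eq_integral) (auto simp: exp_moment_lt_1_def)
    also have "\<dots> \<le> ennreal r" using F that by (intro ennreal_leI) (auto simp: r_def)
    finally have "(\<integral>\<^sup>+ z. ennreal (exp (h z)) \<partial>\<rho>) ^ n \<le> ennreal r ^ n" by (rule power_mono) simp
    then show ?thesis using r by (simp add: ennreal_power)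
  qed
  then have "(\<integral>\<^sup>+ p. indicator (Delta_star \<inter> A) p * ennreal (exp (real n * (fst p)\<^sup>2 / (2 * snd p)))
      \<partial>nu_tilde n \<rho>) \<le> ennreal ((real (card F) + 1) * r ^ n)" if "n > 0" for n
  proof -
    have S: "Delta_star \<inter> A \<in> sets borel" using Delta_star_sets assms(1) by auto
    have F_meas: "h \<in> borel_measurable borel" if "h \<in> F" for h
      using F(2) that by (simp add: exp_moment_lt_1_def)
    note nn_integral_nu_tilde_le_sum_power[OF prob_space_axioms sets_\<rho> S F(1) F_meas F(3) that]
    also have "(\<Sum>h\<in>F. (\<integral>\<^sup>+ z. ennreal (exp (h z)) \<partial>\<rho>) ^ n) \<le> (\<Sum>h\<in>F. ennreal (r ^ n))"
      by (intro sum_mono) fact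
    also have "\<dots> \<le> ennreal ((real (card F) + 1) * r ^ n)"
      using r by (simp add: ennreal_of_nat_eq_real_of_nat ennreal_mult' ennreal_leI mult_right_mono)
    finally show ?thesis .
  qed
  then show ?thesis using r by (intro exI[of _ "real (card F) + 1"] exI[of _ r]) auto
qed

end

lemma exp_square_finite_of_interior_D_Lambda:
  assumes "(0, 0) \<in> interior (D_Lambda \<rho>)"
  shows "\<exists>\<epsilon>>0. (\<integral>\<^sup>+ z. ennreal (exp (\<epsilon> * z\<^sup>2)) \<partial>\<rho>) < \<infinity>"
proof -
  obtain e where "e > 0" and "ball (0, 0) e \<subseteq> D_Lambda \<rho>" using assms by (auto simp: mem_interior)
  moreover have "(0, e / 2) \<in> ball (0 :: real, 0 :: real) e" using \<open>e > 0\<close> by (simp add: dist_Pair_Pair)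
  ultimately show ?thesis by (intro exI[of _ "e / 2"]) (auto simp: D_Lambda_def)
qed

lemma variance_eq_second_moment_of_symmetric:
  fixes \<rho> :: "real measure"
  assumes "prob_space \<rho>" and "sets \<rho> = sets borel" and "distr \<rho> borel uminus = \<rho>"
  shows "prob_space.variance \<rho> (\<lambda>z. z) = (\<integral>z. z\<^sup>2 \<partial>\<rho>)"
proof -
  have "(\<integral>z. z \<partial>distr \<rho> borel uminus) = (\<integral>z. - z \<partial>\<rho>)"
    by (rule integral_distr) (simp_all add: measurable_cong_sets[OF assms(2) refl])
  then have "(\<integral>z. z \<partial>\<rho>) = 0" using assms(3) by simp
  then show ?thesis by simp
qed

theorem proposition5:
  fixes \<rho> :: "real measure" and \<sigma>2 :: real and A :: "(real \<times> real) set"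
  assumes "prob_space \<rho>" and "sets \<rho> = sets borel"
    and "distr \<rho> borel uminus = \<rho>"
    and "\<sigma>2 = prob_space.variance \<rho> (\<lambda>z. z)" and "\<sigma>2 > 0"
    and "(0, 0) \<in> interior (D_Lambda \<rho>)"
    and "closed A" and "(0, \<sigma>2) \<notin> A"
  shows "limsup (\<lambda>n. ereal (1 / real n) *
           eln (\<integral>\<^sup>+ p. indicator (Delta_star \<inter> A) p *
                  ennreal (exp (real n * (fst p)\<^sup>2 / (2 * snd p))) \<partial>(nu_tilde n \<rho>))) < 0"
proof -
  interpret prob_space \<rho> by fact
  have \<sigma>2: "\<sigma>2 = (\<integral>z. z\<^sup>2 \<partial>\<rho>)"
    using assms(4) variance_eq_second_moment_of_symmetric[OF assms(1-3)] by simp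
  obtain \<epsilon> where "\<epsilon> > 0" and "(\<integral>\<^sup>+ z. ennreal (exp (\<epsilon> * z\<^sup>2)) \<partial>\<rho>) < \<infinity>"
    using exp_square_finite_of_interior_D_Lambda[OF assms(6)] by blast
  then interpret symmetric_subgaussian \<rho> \<epsilon>
    using assms(2,3,5) \<sigma>2 by unfold_locales auto
  obtain K r where "0 < K" "0 < r" "r < 1" and decay: "\<forall>n>0. (\<integral>\<^sup>+ p. indicator (Delta_star \<inter> A) p *
      ennreal (exp (real n * (fst p)\<^sup>2 / (2 * snd p))) \<partial>nu_tilde n \<rho>) \<le> ennreal (K * r ^ n)"
    using nn_integral_nu_tilde_exponential_decay[OF assms(7)] assms(8) \<sigma>2 by blast
  have "limsup (\<lambda>n. ereal (1 / real n) * eln (\<integral>\<^sup>+ p. indicator (Delta_star \<inter> A) p *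
      ennreal (exp (real n * (fst p)\<^sup>2 / (2 * snd p))) \<partial>nu_tilde n \<rho>)) \<le> ereal (ln r)"
    using decay \<open>0 < K\<close> \<open>0 < r\<close> by (intro limsup_scaled_eln_le) auto
  also have "\<dots> < 0" using \<open>0 < r\<close> \<open>r < 1\<close> by simp
  finally show ?thesis .
qed

end
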